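(* Let $\mathcal{E}$ be the coarse structure on $\omega$ with base $\{E_H: H\subseteq S_\omega \text{ finite}, \mathrm{id}\in H\}$, $E_H=\{(x,y):y\in Hx\}$, where $S_\omega$ is the group of all permutations of $\omega$. Then $so(\omega,\mathcal{E})=so(\omega,\mathfrak{M}_\omega)$ and $\delta_{(\omega,\mathcal{E})}=\delta_{(\omega,\mathfrak{M}_\omega)}$, although $\mathcal{E}\neq\mathfrak{M}_\omega$; both balleans have exactly the finite sets as bounded sets.
   Context: A ballean $(X,\mathcal{E})$ is a set with a coarse structure. $E[x]=\{y:(x,y)\in E\}$, $E[A]=\bigcup_{a\in A}E[a]$. $Y$ is bounded if $Y\subseteq E[x]$ for some $x$ and $E\in\mathcal{E}$. $A\,\delta_{(X,\mathcal{E})}\,B$ means there is $E\in\mathcal{E}$ with $A\subseteq E[B]$ and $B\subseteq E[A]$. A function $f:X\to\mathbb{R}$ is slowly oscillating if for every $E\in\mathcal{E}$ and $\varepsilon>0$ there is a bounded $B$ with $\operatorname{diam} f(E[x])<\varepsilon$ for all $x\in X\setminus B$; $so(X,\mathcal{E})$ denotes the set of bounded slowly oscillating functions. $\mathfrak{M}_\omega$ is the coarse structure on $\omega$ with base $\{M_{\mathcal{P}}\}$, where $\mathcal{P}$ ranges over coverings of $\omega$ by finite sets such that for each $x\in\omega$ the set $\bigcup\{P'\in\mathcal{P}:x\in P'\}$ is finite, and $M_{\mathcal{P}}=\{(x,y):x,y\in P\text{ for some }P\in\mathcal{P}\}$. *)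

theory Defs
  imports "HOL-Analysis.Analysis"
begin

text \<open>A ballean is given by its family of entourages ent. E[x] is E `` {x}.\<close>

definition ball_bounded :: "('a \<times> 'a) set set \<Rightarrow> 'a set \<Rightarrow> bool" where
  "ball_bounded ent Y \<longleftrightarrow> (\<exists>x. \<exists>E\<in>ent. Y \<subseteq> E `` {x})"

definition ball_delta :: "('a \<times> 'a) set set \<Rightarrow> 'a set \<Rightarrow> 'a set \<Rightarrow> bool" where
  "ball_delta ent A B \<longleftrightarrow> (\<exists>E\<in>ent. A \<subseteq> E `` B \<and> B \<subseteq> E `` A)"

definition slowly_oscillating :: "('a \<times> 'a) set set \<Rightarrow> ('a \<Rightarrow> real) \<Rightarrow> bool" where
  "slowly_oscillating ent f \<longleftrightarrow>
     (\<forall>E\<in>ent. \<forall>\<epsilon>>0. \<exists>B. ball_bounded ent B \<and>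
        (\<forall>x. x \<notin> B \<longrightarrow> diameter (f ` (E `` {x})) < \<epsilon>))"

definition so :: "('a \<times> 'a) set set \<Rightarrow> ('a \<Rightarrow> real) set" where
  "so ent = {f. bounded (range f) \<and> slowly_oscillating ent f}"

definition E_H :: "(nat \<Rightarrow> nat) set \<Rightarrow> (nat \<times> nat) set" where
  "E_H H = {(x, y). \<exists>h\<in>H. y = h x}"

definition perm_coarse :: "(nat \<times> nat) set set" where
  "perm_coarse = {E. \<exists>H. finite H \<and> id \<in> H \<and> (\<forall>h\<in>H. bij h) \<and> E \<subseteq> E_H H}"

definition admissible_cover :: "nat set set \<Rightarrow> bool" where
  "admissible_cover P \<longleftrightarrow> \<Union>P = UNIV \<and> (\<forall>p\<in>P. finite p) \<and>
     (\<forall>x. finite (\<Union>{p\<in>P. x \<in> p}))"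

definition M_P :: "nat set set \<Rightarrow> (nat \<times> nat) set" where
  "M_P P = {(x, y). \<exists>p\<in>P. x \<in> p \<and> y \<in> p}"

definition M_omega :: "(nat \<times> nat) set set" where
  "M_omega = {E. \<exists>P. admissible_cover P \<and> E \<subseteq> M_P P}"

end

theory Submission
  imports Defs "HOL-Library.Infinite_Set" "HOL-Combinatorics.Transposition"
begin

text \<open>Both coarse structures have finite balls, so in both the bounded sets are exactly the
finite sets, and every entourage of \<open>\<E>\<close> lies in \<open>\<M>\<^sub>\<omega>\<close> because the sets
\<open>H x\<close> form an admissible cover. Conversely a single permutation can exchange two disjoint sets
\<open>C\<close> and \<open>g ` C\<close>: this suffices to bring any set within one step of an infinite set, and it
shows that a bounded function slowly oscillating for \<open>\<E>\<close> must converge (otherwise it could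
exchange infinitely many points far from a cluster value with infinitely many points close to it).
Convergent functions are slowly oscillating for \<open>\<M>\<^sub>\<omega>\<close>, whose balls eventually avoid
any initial segment. The cover \<open>{k..2k}\<close> has balls of unbounded size, so it is not an entourage
of \<open>\<E>\<close>.\<close>

definition interchange :: "'a set \<Rightarrow> ('a \<Rightarrow> 'a) \<Rightarrow> 'a \<Rightarrow> 'a" where
  "interchange C g x = (if x \<in> C then g x else if x \<in> g ` C then inv_into C g x else x)"

lemma interchange_involution:
  assumes "inj_on g C" "C \<inter> g ` C = {}"
  shows "interchange C g (interchange C g x) = x"
  using assms by (auto simp: interchange_def inv_into_into f_inv_into_f)

lemma bij_interchange:
  assumes "inj_on g C" "C \<inter> g ` C = {}"
  shows "bij (interchange C g)"
  by (rule o_bij[of "interchange C g"]) (simp_all add: fun_eq_iff interchange_involution[OF assms])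

lemma exists_involution_into_infinite:
  fixes C B :: "nat set"
  assumes "infinite B" "C \<inter> B = {}"
  obtains h where "bij h" "\<And>x. x \<in> C \<Longrightarrow> h x \<in> B \<and> h (h x) = x"
proof
  let ?g = "enumerate B"
  have inj: "inj_on ?g C" using inj_enumerate[OF assms(1)] by (rule inj_on_subset) simp
  have disj: "C \<inter> ?g ` C = {}" using enumerate_in_set[OF assms(1)] assms(2) by blast
  from inj disj show "bij (interchange C ?g)" by (rule bij_interchange)
  show "interchange C ?g x \<in> B \<and> interchange C ?g (interchange C ?g x) = x" if "x \<in> C" for x
  proof
    show "interchange C ?g x \<in> B"
      using that enumerate_in_set[OF assms(1)] by (simp add: interchange_def)
  qed (rule interchange_involution[OF inj disj])
qed

lemma ball_bounded_mono: "ent \<subseteq> ent' \<Longrightarrow> ball_bounded ent Y \<Longrightarrow> ball_bounded ent' Y"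
  by (auto simp: ball_bounded_def)

lemma ball_delta_mono: "ent \<subseteq> ent' \<Longrightarrow> ball_delta ent A B \<Longrightarrow> ball_delta ent' A B"
  by (auto simp: ball_delta_def)

lemma so_antimono:
  assumes "ent \<subseteq> ent'" "\<And>B. ball_bounded ent' B \<Longrightarrow> ball_bounded ent B"
  shows "so ent' \<subseteq> so ent"
  using assms unfolding so_def slowly_oscillating_def by blast

lemma E_H_Image_singleton: "E_H H `` {x} = (\<lambda>h. h x) ` H"
  by (auto simp: E_H_def)

lemma E_H_in_perm_coarse: "finite H \<Longrightarrow> id \<in> H \<Longrightarrow> \<forall>h\<in>H. bij h \<Longrightarrow> E_H H \<in> perm_coarse"
  by (auto simp: perm_coarse_def)

lemma perm_coarse_Un:
  assumes "E1 \<in> perm_coarse" "E2 \<in> perm_coarse"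
  shows "E1 \<union> E2 \<in> perm_coarse"
proof -
  obtain H1 H2 where "finite H1" "id \<in> H1" "\<forall>h\<in>H1. bij h" "E1 \<subseteq> E_H H1"
    and "finite H2" "\<forall>h\<in>H2. bij h" "E2 \<subseteq> E_H H2"
    using assms by (auto simp: perm_coarse_def)
  then show ?thesis unfolding perm_coarse_def
    by (intro CollectI exI[of _ "H1 \<union> H2"]) (auto simp: E_H_def)
qed

lemma perm_coarse_covers_finite:
  assumes "finite A" "b \<in> B"
  shows "\<exists>E\<in>perm_coarse. A \<subseteq> E `` B"
proof
  let ?H = "insert id (Transposition.transpose b ` A)"
  show "E_H ?H \<in> perm_coarse" using assms(1) by (intro E_H_in_perm_coarse) auto
  have "(b, a) \<in> E_H ?H" if "a \<in> A" for a
    using that unfolding E_H_def by (auto intro!: bexI[of _ "Transposition.transpose b a"])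
  then show "A \<subseteq> E_H ?H `` B" using assms(2) by blast
qed

lemma perm_coarse_covers_infinite:
  assumes "infinite B"
  shows "\<exists>E\<in>perm_coarse. A \<subseteq> E `` B"
proof -
  obtain h where h: "bij h" "\<And>x. x \<in> A - B \<Longrightarrow> h x \<in> B \<and> h (h x) = x"
    using exists_involution_into_infinite[OF assms, of "A - B"] by blast
  have "E_H {id, h} \<in> perm_coarse" using h(1) by (intro E_H_in_perm_coarse) auto
  moreover have "a \<in> E_H {id, h} `` B" if "a \<in> A" for a
  proof (cases "a \<in> B")
    case False
    with that h(2)[of a] have "(h a, a) \<in> E_H {id, h}" "h a \<in> B" by (auto simp: E_H_def)
    then show ?thesis by blast
  qed (auto simp: E_H_def)
  ultimately show ?thesis by blast
qed

lemma ball_bounded_perm_coarse_if_finite: "finite Y \<Longrightarrow> ball_bounded perm_coarse Y"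
  using perm_coarse_covers_finite[of Y 0 "{0}"] by (auto simp: ball_bounded_def)

lemma M_P_Image_singleton: "M_P P `` {x} = \<Union>{p\<in>P. x \<in> p}"
  by (auto simp: M_P_def)

lemma M_omega_Image_finite:
  assumes "E \<in> M_omega" "finite S"
  shows "finite (E `` S)"
proof -
  obtain P where "admissible_cover P" "E \<subseteq> M_P P" using assms(1) by (auto simp: M_omega_def)
  then have "finite (E `` {x})" for x
    by (metis Image_mono M_P_Image_singleton admissible_cover_def finite_subset order_refl)
  moreover have "E `` S = (\<Union>x\<in>S. E `` {x})" by auto
  ultimately show ?thesis using assms(2) by simp
qed

lemma converse_M_omega: "E \<in> M_omega \<Longrightarrow> converse E \<in> M_omega"
  by (fastforce simp: M_omega_def M_P_def)

lemma finite_if_ball_bounded_M_omega: "ball_bounded M_omega Y \<Longrightarrow> finite Y"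
  unfolding ball_bounded_def by (meson M_omega_Image_finite finite.emptyI finite_insert finite_subset)

lemma perm_coarse_subset_M_omega: "perm_coarse \<subseteq> M_omega"
proof
  fix E assume "E \<in> perm_coarse"
  then obtain H where H: "finite H" "id \<in> H" "\<forall>h\<in>H. bij h" "E \<subseteq> E_H H"
    by (auto simp: perm_coarse_def)
  define P where "P = range (\<lambda>x. (\<lambda>h. h x) ` H)"
  have self_mem: "x \<in> (\<lambda>h. h x) ` H" for x using H(2) by (metis id_apply image_eqI)
  have "admissible_cover P"
    unfolding admissible_cover_def
  proof (intro conjI allI ballI)
    show "\<Union> P = UNIV" using self_mem by (auto simp: P_def)
    show "finite p" if "p \<in> P" for p using that H(1) by (auto simp: P_def)
    fix x
    have "{p\<in>P. x \<in> p} \<subseteq> (\<lambda>g. (\<lambda>h. h (inv g x)) ` H) ` H"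
    proof
      fix p assume "p \<in> {p\<in>P. x \<in> p}"
      then obtain y h where p: "p = (\<lambda>h. h y) ` H" and "h \<in> H" "x = h y"
        by (auto simp: P_def)
      then have "y = inv h x" using H(3) by (metis bij_inv_eq_iff)
      with p show "p \<in> (\<lambda>g. (\<lambda>h. h (inv g x)) ` H) ` H" using \<open>h \<in> H\<close> by blast
    qed
    then have "finite {p\<in>P. x \<in> p}" using H(1) by (meson finite_imageI finite_subset)
    then show "finite (\<Union>{p\<in>P. x \<in> p})"
      by (rule finite_Union) (auto simp: P_def H(1))
  qed
  moreover have "E_H H \<subseteq> M_P P"
  proof
    fix z assume "z \<in> E_H H"
    then obtain x h where "z = (x, h x)" "h \<in> H" by (auto simp: E_H_def)
    then show "z \<in> M_P P" unfolding M_P_def P_def using self_mem[of x] by blast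
  qed
  ultimately show "E \<in> M_omega" using H(4) by (auto simp: M_omega_def)
qed

lemma perm_coarse_neq_M_omega: "perm_coarse \<noteq> M_omega"
proof
  assume eq: "perm_coarse = M_omega"
  define P where "P = range (\<lambda>k::nat. {k..2*k})"
  have "admissible_cover P"
    unfolding admissible_cover_def
  proof (intro conjI allI ballI)
    show "\<Union> P = UNIV" by (force simp: P_def)
    show "finite p" if "p \<in> P" for p using that by (auto simp: P_def)
    have "\<Union>{p\<in>P. x \<in> p} \<subseteq> {..2*x}" for x by (auto simp: P_def)
    then show "finite (\<Union>{p\<in>P. x \<in> p})" for x by (meson finite_atMost finite_subset)
  qed
  then have "M_P P \<in> perm_coarse" using eq by (auto simp: M_omega_def)
  then obtain H where H: "finite H" "M_P P \<subseteq> E_H H" by (auto simp: perm_coarse_def)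
  define k where "k = card H"
  have "{k..2*k} \<subseteq> M_P P `` {k}" by (auto simp: M_P_def P_def)
  also have "\<dots> \<subseteq> (\<lambda>h. h k) ` H" using H(2) E_H_Image_singleton[of H k] by blast
  finally have "card {k..2*k} \<le> card ((\<lambda>h. h k) ` H)" using H(1) by (meson card_mono finite_imageI)
  also have "\<dots> \<le> k" unfolding k_def by (rule card_image_le[OF H(1)])
  finally show False by simp
qed

lemma ball_bounded_perm_coarse_iff: "ball_bounded perm_coarse Y \<longleftrightarrow> finite Y"
  by (meson ball_bounded_mono ball_bounded_perm_coarse_if_finite finite_if_ball_bounded_M_omega
      perm_coarse_subset_M_omega)

lemma ball_bounded_M_omega_iff: "ball_bounded M_omega Y \<longleftrightarrow> finite Y"
  by (meson ball_bounded_mono ball_bounded_perm_coarse_if_finite finite_if_ball_bounded_M_omega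
      perm_coarse_subset_M_omega)

lemma perm_coarse_covers_M_omega:
  assumes "E \<in> M_omega" "A \<subseteq> E `` B"
  shows "\<exists>E'\<in>perm_coarse. A \<subseteq> E' `` B"
proof (cases "finite B")
  case True
  then have "finite A" using assms M_omega_Image_finite finite_subset by blast
  show ?thesis
  proof (cases "B = {}")
    case True
    then have "A \<subseteq> E_H {id} `` B" using assms(2) by simp
    moreover have "E_H {id} \<in> perm_coarse" by (intro E_H_in_perm_coarse) auto
    ultimately show ?thesis by blast
  next
    case False
    then show ?thesis using perm_coarse_covers_finite[OF \<open>finite A\<close>] by blast
  qed
qed (rule perm_coarse_covers_infinite)

lemma ball_delta_perm_coarse_eq_M_omega: "ball_delta perm_coarse = ball_delta M_omega"
proof (intro ext iffI)
  fix A B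
  show "ball_delta perm_coarse A B \<Longrightarrow> ball_delta M_omega A B"
    by (rule ball_delta_mono[OF perm_coarse_subset_M_omega])
  assume "ball_delta M_omega A B"
  then obtain E where E: "E \<in> M_omega" "A \<subseteq> E `` B" "B \<subseteq> E `` A"
    by (auto simp: ball_delta_def)
  obtain E1 E2 where "E1 \<in> perm_coarse" "A \<subseteq> E1 `` B" "E2 \<in> perm_coarse" "B \<subseteq> E2 `` A"
    using perm_coarse_covers_M_omega[OF E(1)] E(2,3) by meson
  then show "ball_delta perm_coarse A B"
    unfolding ball_delta_def by (intro bexI[of _ "E1 \<union> E2"] perm_coarse_Un) auto
qed

lemma convergent_imp_so_M_omega:
  assumes "convergent f"
  shows "f \<in> so M_omega"
  unfolding so_def slowly_oscillating_def
proof (intro CollectI conjI ballI allI impI)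
  show "bounded (range f)" using convergent_imp_Bseq[OF assms] by (simp add: Bseq_eq_bounded)
  fix E and e :: real assume "E \<in> M_omega" "e > 0"
  obtain L where "f \<longlonglongrightarrow> L" using assms by (auto simp: convergent_def)
  then obtain N where N: "\<And>n. n \<ge> N \<Longrightarrow> dist (f n) L < e/3"
    using LIMSEQ_D[of f L "e/3"] \<open>e > 0\<close> by (auto simp: dist_norm)
  let ?B = "converse E `` {..<N}"
  have "finite ?B" using M_omega_Image_finite[OF converse_M_omega[OF \<open>E \<in> M_omega\<close>]] by blast
  moreover have "diameter (f ` (E `` {x})) < e" if "x \<notin> ?B" for x
  proof -
    have "N \<le> y" if "y \<in> E `` {x}" for y
      using \<open>x \<notin> ?B\<close> that by (meson ImageI Image_singleton_iff converse.intros lessThan_iff not_le)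
    then have "f ` (E `` {x}) \<subseteq> cball L (e/3)"
      using N by (force simp: dist_commute)
    then have "diameter (f ` (E `` {x})) \<le> diameter (cball L (e/3))"
      by (rule diameter_subset) simp
    then show ?thesis using \<open>e > 0\<close> by simp
  qed
  ultimately show "\<exists>B. ball_bounded M_omega B \<and> (\<forall>x. x \<notin> B \<longrightarrow> diameter (f ` (E `` {x})) < e)"
    using ball_bounded_M_omega_iff by blast
qed

lemma bounded_range_cluster_value:
  fixes f :: "nat \<Rightarrow> real"
  assumes "bounded (range f)"
  obtains L where "\<And>e. e > 0 \<Longrightarrow> infinite {n. dist (f n) L < e}"
proof -
  obtain r where r: "strict_mono r" "monoseq (f \<circ> r)"
    using seq_monosub[of f] by (auto simp: comp_def)
  have "range (f \<circ> r) \<subseteq> range f" by auto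
  then have "Bseq (f \<circ> r)" using assms by (simp add: Bseq_eq_bounded bounded_subset)
  then obtain L where L: "(f \<circ> r) \<longlonglongrightarrow> L"
    using r(2) Bseq_monoseq_convergent convergent_def by blast
  have "infinite {n. dist (f n) L < e}" if "e > 0" for e
  proof -
    obtain N where "\<And>n. n \<ge> N \<Longrightarrow> dist ((f \<circ> r) n) L < e"
      using LIMSEQ_D[OF L \<open>e > 0\<close>] by (auto simp: dist_norm)
    then have "r ` {N..} \<subseteq> {n. dist (f n) L < e}" by auto
    moreover have "infinite (r ` {N..})"
      using strict_mono_imp_inj_on[OF r(1)] finite_imageD infinite_Ici inj_on_subset by blast
    ultimately show ?thesis using finite_subset by blast
  qed
  then show ?thesis by (rule that)
qed

lemma so_perm_coarse_imp_convergent: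
  assumes "f \<in> so perm_coarse"
  shows "convergent f"
proof -
  have so: "slowly_oscillating perm_coarse f" using assms by (simp add: so_def)
  obtain L where L: "\<And>e. e > 0 \<Longrightarrow> infinite {n. dist (f n) L < e}"
    using bounded_range_cluster_value assms by (auto simp: so_def)
  have "\<forall>\<^sub>F n in sequentially. dist (f n) L < e" if "e > 0" for e
  proof (rule ccontr)
    let ?W = "{n. \<not> dist (f n) L < e}" and ?U = "{n. dist (f n) L < e/3}"
    assume "\<not> ?thesis"
    then have "infinite ?W" by (simp add: cofinite_eq_sequentially[symmetric] eventually_cofinite)
    have "infinite ?U" using L[of "e/3"] \<open>e > 0\<close> by simp
    moreover have "?W \<inter> ?U = {}" using \<open>e > 0\<close> by auto
    ultimately obtain h where h: "bij h" "\<And>x. x \<in> ?W \<Longrightarrow> h x \<in> ?U \<and> h (h x) = x"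
      using exists_involution_into_infinite by blast
    have "E_H {id, h} \<in> perm_coarse" using h(1) by (intro E_H_in_perm_coarse) auto
    then obtain B where "ball_bounded perm_coarse B"
      and B: "\<And>x. x \<notin> B \<Longrightarrow> diameter (f ` (E_H {id, h} `` {x})) < e/3"
      using so[unfolded slowly_oscillating_def, rule_format, of _ "e/3"] \<open>e > 0\<close> by auto
    then have "finite B" by (simp add: ball_bounded_perm_coarse_iff)
    then obtain x where x: "x \<in> ?W" "x \<notin> B" using \<open>infinite ?W\<close> by (meson finite_subset subsetI)
    have "dist (f x) (f (h x)) \<le> diameter (f ` (E_H {id, h} `` {x}))"
      by (rule diameter_bounded_bound) (auto simp: E_H_Image_singleton)
    moreover have "dist (f x) (f (h x)) \<ge> 2 * e / 3"
      using x(1) h(2)[OF x(1)] dist_triangle[of "f x" L "f (h x)"] by (simp add: dist_commute)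
    ultimately show False using B[OF x(2)] \<open>e > 0\<close> by linarith
  qed
  then have "f \<longlonglongrightarrow> L" by (simp add: tendsto_iff)
  then show ?thesis by (rule convergentI)
qed

lemma so_perm_coarse_eq_M_omega: "so perm_coarse = so M_omega"
proof
  show "so perm_coarse \<subseteq> so M_omega"
    using so_perm_coarse_imp_convergent convergent_imp_so_M_omega by blast
  show "so M_omega \<subseteq> so perm_coarse"
    by (rule so_antimono[OF perm_coarse_subset_M_omega])
      (simp add: ball_bounded_perm_coarse_iff ball_bounded_M_omega_iff)
qed

theorem mainTheorem11:
  shows "so perm_coarse = so M_omega
    \<and> ball_delta perm_coarse = ball_delta M_omega
    \<and> perm_coarse \<noteq> M_omega
    \<and> (\<forall>Y. ball_bounded perm_coarse Y \<longleftrightarrow> finite Y)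
    \<and> (\<forall>Y. ball_bounded M_omega Y \<longleftrightarrow> finite Y)"
  using so_perm_coarse_eq_M_omega ball_delta_perm_coarse_eq_M_omega perm_coarse_neq_M_omega
    ball_bounded_perm_coarse_iff ball_bounded_M_omega_iff by blast

end
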